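(* Let $m,n\ge 1$ and let $\Gamma$ be an acyclic $(m+n-1)$-graph such that the graph $\Delta_0(\Gamma)$ (defined in the context) is also acyclic. If $\Delta_1(\Gamma)$ has $s$ connected components and $\Delta_0(\Gamma)$ has $t$ connected components, then $\Gamma$ has exactly $s+t-1$ connected components.
   Context: For $N\ge1$, an $N$-graph is a graph with vertex set $\{1,\dots,N\}$ and a finite collection of oriented edges between distinct vertices (multiple edges allowed, no loops). It is acyclic if it contains no unoriented cycle (in particular, no two edges join the same pair of vertices). For an $(m+n-1)$-graph $\Gamma$, group its vertices as $\{1,\dots,m\},\{m+1\},\dots,\{m+n-1\}$. Then $\Delta_1(\Gamma)$ is the $m$-graph which is the subgraph of $\Gamma$ on vertices $1,\dots,m$ with all edges of $\Gamma$ among them, and $\Delta_0(\Gamma)$ is the $n$-graph obtained by clasping the vertices $1,\dots,m$ into a single vertex labeled $1$ (vertex $a\ge m+1$ becomes vertex $a-m+1$), keeping every edge of $\Gamma$ whose endpoints lie in different groups (as an edge between the images of its endpoints) and discarding the edges among $1,\dots,m$. *)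

theory Defs
  imports Main
begin

text \<open>An N-graph: vertex set {1..N}; edges are a finite list (indexed collection)
  of oriented edges (a,b) from a to b, with a \<noteq> b; multiple edges allowed.\<close>

type_synonym ngraph = "(nat \<times> nat) list"

definition is_ngraph :: "nat \<Rightarrow> ngraph \<Rightarrow> bool" where
  "is_ngraph N E \<longleftrightarrow> (\<forall>(a,b)\<in>set E. a \<in> {1..N} \<and> b \<in> {1..N} \<and> a \<noteq> b)"

definition joins :: "nat \<times> nat \<Rightarrow> nat \<Rightarrow> nat \<Rightarrow> bool" where
  "joins e u v \<longleftrightarrow> e = (u, v) \<or> e = (v, u)"

definition has_cycle :: "ngraph \<Rightarrow> bool" where
  "has_cycle E \<longleftrightarrow> (\<exists>es vs. length es = length vs \<and> 2 \<le> length es \<and>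
      distinct es \<and> distinct vs \<and> (\<forall>i\<in>set es. i < length E) \<and>
      (\<forall>i<length es. joins (E ! (es ! i)) (vs ! i) (vs ! ((i + 1) mod length es))))"

definition acyclic_graph :: "ngraph \<Rightarrow> bool" where
  "acyclic_graph E \<longleftrightarrow> \<not> has_cycle E"

definition adj :: "ngraph \<Rightarrow> nat \<Rightarrow> nat \<Rightarrow> bool" where
  "adj E u v \<longleftrightarrow> (\<exists>e\<in>set E. joins e u v)"

definition connected_in :: "ngraph \<Rightarrow> nat \<Rightarrow> nat \<Rightarrow> bool" where
  "connected_in E = (adj E)\<^sup>*\<^sup>*"

definition num_components :: "nat \<Rightarrow> ngraph \<Rightarrow> nat" where
  "num_components N E =
     card ({1..N} // {(u, v). u \<in> {1..N} \<and> v \<in> {1..N} \<and> connected_in E u v})"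

definition Delta1 :: "nat \<Rightarrow> ngraph \<Rightarrow> ngraph" where
  "Delta1 m E = filter (\<lambda>(a, b). a \<le> m \<and> b \<le> m) E"

definition clasp :: "nat \<Rightarrow> nat \<Rightarrow> nat" where
  "clasp m a = (if a \<le> m then 1 else a - m + 1)"

definition Delta0 :: "nat \<Rightarrow> ngraph \<Rightarrow> ngraph" where
  "Delta0 m E = map (\<lambda>(a, b). (clasp m a, clasp m b))
                  (filter (\<lambda>(a, b). \<not> (a \<le> m \<and> b \<le> m)) E)"

end

theory Submission
  imports Defs
begin

text \<open>An acyclic N-graph is a forest, so it has exactly N minus (number of edges) components:
  each edge joins two different components, since an edge inside a component would close a cycle.
  Delta1 \<Gamma> is acyclic as a subgraph of \<Gamma>, Delta0 \<Gamma> is acyclic by hypothesis, and every edge of \<Gamma>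
  lies in exactly one of them. Hence (m - s) + (n - t) = |E(\<Gamma>)| = (m + n - 1) - c, where c is the
  number of components of \<Gamma>.\<close>

lemma symp_adj: "symp (adj E)"
  unfolding adj_def joins_def by (auto intro: sympI)

lemma equivp_connected_in: "equivp (connected_in E)"
  unfolding connected_in_def by (rule equivp_rtranclp[OF symp_adj])

lemma connected_in_sym: "connected_in E u v \<Longrightarrow> connected_in E v u"
  by (rule equivp_symp[OF equivp_connected_in])

lemma connected_in_trans: "connected_in E u v \<Longrightarrow> connected_in E v w \<Longrightarrow> connected_in E u w"
  by (rule equivp_transp[OF equivp_connected_in])

lemma connected_in_refl [simp]: "connected_in E u u"
  by (rule equivp_reflp[OF equivp_connected_in])

lemma connected_in_Nil [simp]: "connected_in [] u v \<longleftrightarrow> u = v"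
  unfolding connected_in_def adj_def by (auto elim: converse_rtranclpE)

lemma connected_in_Cons_iff:
  "connected_in ((a, b) # E) u v \<longleftrightarrow>
     connected_in E u v \<or> connected_in E u a \<and> connected_in E b v \<or> connected_in E u b \<and> connected_in E a v"
  (is "?lhs \<longleftrightarrow> ?rhs")
proof
  assume ?lhs
  then show ?rhs
    unfolding connected_in_def[of "(a, b) # E"]
  proof (induction rule: rtranclp_induct)
    case (step y z)
    have "adj E y z \<or> y = a \<and> z = b \<or> y = b \<and> z = a"
      using step.hyps(2) unfolding adj_def joins_def by auto
    moreover have "adj E y z \<Longrightarrow> connected_in E y z"
      unfolding connected_in_def by blast
    ultimately show ?case
      using step.IH connected_in_trans connected_in_sym connected_in_refl by metis
  qed simp
next
  have mono: "connected_in E x y \<Longrightarrow> connected_in ((a, b) # E) x y" for x y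
    unfolding connected_in_def
    by (erule rtranclp_mono[THEN predicate2D, rotated]) (auto simp: adj_def)
  have "connected_in ((a, b) # E) a b"
    unfolding connected_in_def adj_def joins_def by auto
  moreover assume ?rhs
  ultimately show ?lhs
    using mono connected_in_sym connected_in_trans by metis
qed

definition component :: "nat \<Rightarrow> ngraph \<Rightarrow> nat \<Rightarrow> nat set" where
  "component N E u = {v \<in> {1..N}. connected_in E u v}"

lemma num_components_eq_card_components:
  "num_components N E = card (component N E ` {1..N})"
  unfolding num_components_def quotient_def component_def by (auto intro: arg_cong[where f = card])

lemma component_eq_iff:
  "u \<in> {1..N} \<Longrightarrow> v \<in> {1..N} \<Longrightarrow> component N E u = component N E v \<longleftrightarrow> connected_in E u v"
  unfolding component_def using connected_in_sym connected_in_trans connected_in_refl by blast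

lemma component_Cons:
  "component N ((a, b) # E) u =
     (if connected_in E u a \<or> connected_in E u b
      then component N E a \<union> component N E b else component N E u)"
proof (cases "connected_in E u a \<or> connected_in E u b")
  case True
  then have "connected_in ((a, b) # E) u v \<longleftrightarrow> connected_in E a v \<or> connected_in E b v" for v
    unfolding connected_in_Cons_iff by (meson connected_in_sym connected_in_trans)
  then show ?thesis
    using True unfolding component_def by auto
next
  case False
  then show ?thesis
    unfolding component_def connected_in_Cons_iff by auto
qed

lemma card_image_merge:
  assumes "finite S" "x \<in> S" "y \<in> S" "x \<noteq> y" "g y = g x" "inj_on g (S - {y})"
  shows "card (g ` S) + 1 = card S"
proof -
  have "g y \<in> g ` (S - {y})"
    using assms(2,4,5) by (metis DiffI image_eqI singletonD)
  then have "g ` S = g ` (S - {y})"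
    using assms(3) by (metis image_insert insert_Diff insert_absorb)
  moreover have "card (S - {y}) + 1 = card S"
    using assms(1,3) card_Suc_Diff1 by fastforce
  ultimately show ?thesis
    using assms(6) by (simp add: card_image)
qed

lemma num_components_Cons:
  assumes a: "a \<in> {1..N}" and b: "b \<in> {1..N}" and disconnected: "\<not> connected_in E a b"
  shows "num_components N ((a, b) # E) + 1 = num_components N E"
proof -
  let ?C = "component N E"
  define g where "g X = (if X = ?C a \<or> X = ?C b then ?C a \<union> ?C b else X)" for X
  have "component N ((a, b) # E) u = g (?C u)" if "u \<in> {1..N}" for u
    using that a b component_eq_iff[of u N] connected_in_sym
    unfolding component_Cons g_def by metis
  then have image: "component N ((a, b) # E) ` {1..N} = g ` (?C ` {1..N})"
    by (auto simp: image_comp)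
  have merged: "X = ?C a" if "X \<in> ?C ` {1..N}" "X = ?C a \<union> ?C b" for X
    using that a component_eq_iff unfolding component_def by blast
  have "inj_on g (?C ` {1..N} - {?C b})"
  proof (rule inj_onI)
    fix X Y assume "X \<in> ?C ` {1..N} - {?C b}" "Y \<in> ?C ` {1..N} - {?C b}" "g X = g Y"
    then show "X = Y"
      unfolding g_def by (metis DiffE singletonI merged)
  qed
  moreover have "?C a \<noteq> ?C b"
    using component_eq_iff a b disconnected by blast
  ultimately show ?thesis
    unfolding num_components_eq_card_components image
    using a b by (intro card_image_merge) (auto simp: g_def)
qed

lemma connected_in_imp_distinct_walk:
  assumes "connected_in E u v"
  obtains vs where "vs \<noteq> []" "hd vs = u" "last vs = v" "distinct vs" "successively (adj E) vs"
  using assms unfolding connected_in_def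
proof (induction arbitrary: thesis rule: converse_rtranclp_induct)
  case base
  show ?case by (rule base[of "[v]"]) simp_all
next
  case (step u w)
  obtain vs where vs: "vs \<noteq> []" "hd vs = w" "last vs = v" "distinct vs" "successively (adj E) vs"
    by (rule step.IH)
  show ?case
  proof (cases "u \<in> set vs")
    case True
    then obtain xs ys where split: "vs = xs @ u # ys" by (meson split_list)
    show ?thesis
      by (rule step.prems[of "u # ys"]) (use vs in \<open>auto simp: split successively_append_iff\<close>)
  next
    case False
    show ?thesis
      by (rule step.prems[of "u # vs"]) (use vs False step.hyps in \<open>auto simp: successively_Cons\<close>)
  qed
qed

lemma has_cycle_Cons_walk:
  assumes "distinct vs" "2 \<le> length vs" "successively (adj E) vs" "joins e (last vs) (hd vs)"
  shows "has_cycle (e # E)"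
proof -
  define k where "k = length vs - 1"
  have len: "length vs = Suc k"
    using assms(2) unfolding k_def by simp
  have "\<forall>i<k. \<exists>j. j < length E \<and> joins (E ! j) (vs ! i) (vs ! Suc i)"
    using successively_nth[OF assms(3)] len unfolding adj_def by (metis in_set_conv_nth lessI less_trans_Suc)
  then obtain idx where idx: "\<And>i. i < k \<Longrightarrow> idx i < length E \<and> joins (E ! idx i) (vs ! i) (vs ! Suc i)"
    by metis
  have "inj_on idx {..<k}"
  proof (rule inj_onI)
    fix i j assume ij: "i \<in> {..<k}" "j \<in> {..<k}" "idx i = idx j"
    then have "vs ! i = vs ! j \<or> vs ! i = vs ! Suc j"
      using idx[of i] idx[of j] unfolding joins_def by auto
    moreover have "vs ! Suc i = vs ! Suc j \<or> vs ! Suc i = vs ! j"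
      using ij idx[of i] idx[of j] unfolding joins_def by auto
    ultimately show "i = j"
      using ij assms(1) len by (auto simp: nth_eq_iff_index_eq)
  qed
  \<comment> \<open>Index 0 of \<open>e # E\<close> is the closing edge; the walk edges are shifted by one.\<close>
  define es where "es = map (Suc \<circ> idx) [0..<k] @ [0]"
  have les: "length es = Suc k"
    unfolding es_def by simp
  show ?thesis
    unfolding has_cycle_def
  proof (intro exI conjI allI impI)
    show "length es = length vs" "2 \<le> length es"
      using les len assms(2) by simp_all
    show "distinct es"
      using \<open>inj_on idx {..<k}\<close> unfolding es_def
      by (auto simp: distinct_map inj_on_def lessThan_atLeast0)
    show "distinct vs" by fact
    show "\<forall>i\<in>set es. i < length (e # E)"
      unfolding es_def using idx by auto
    fix i assume "i < length es"
    then consider "i < k" | "i = k"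
      using les by linarith
    then show "joins ((e # E) ! (es ! i)) (vs ! i) (vs ! ((i + 1) mod length es))"
    proof cases
      case 1
      then show ?thesis
        using idx[OF 1] les unfolding es_def by (simp add: nth_append)
    next
      case 2
      have "vs \<noteq> []"
        using len by auto
      then have "last vs = vs ! k" "hd vs = vs ! 0"
        using len by (simp_all add: last_conv_nth hd_conv_nth)
      then show ?thesis
        using 2 assms(4) les unfolding es_def by (simp add: nth_append)
    qed
  qed
qed

lemma has_cycle_Cons_if_connected:
  assumes "a \<noteq> b" "connected_in E a b"
  shows "has_cycle ((a, b) # E)"
proof -
  obtain vs where vs: "vs \<noteq> []" "hd vs = a" "last vs = b" "distinct vs" "successively (adj E) vs"
    using connected_in_imp_distinct_walk[OF assms(2)] .
  have "2 \<le> length vs"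
    using vs(1-3) assms(1) by (cases vs) (auto simp: Suc_le_eq)
  then show ?thesis
    using vs by (intro has_cycle_Cons_walk) (auto simp: joins_def)
qed

lemma has_cycle_map_nth:
  assumes cycle: "has_cycle (map (nth E) I)" and "distinct I" and I: "\<forall>i\<in>set I. i < length E"
  shows "has_cycle E"
proof -
  obtain es vs where h: "length es = length vs" "2 \<le> length es" "distinct es" "distinct vs"
    "\<forall>i\<in>set es. i < length I"
    "\<forall>i<length es. joins (map (nth E) I ! (es ! i)) (vs ! i) (vs ! ((i + 1) mod length es))"
    using cycle unfolding has_cycle_def by auto
  have "inj_on (nth I) (set es)"
    using h(5) \<open>distinct I\<close> by (auto intro: inj_onI simp: nth_eq_iff_index_eq)
  then show ?thesis
    unfolding has_cycle_def using h I
    by (intro exI[of _ "map (nth I) es"] exI[of _ vs]) (auto simp: distinct_map)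
qed

lemma has_cycle_filter: "has_cycle (filter P E) \<Longrightarrow> has_cycle E"
  by (rule has_cycle_map_nth[where I = "filter (P \<circ> nth E) [0..<length E]"])
     (simp_all add: filter_map[symmetric] map_nth)

lemma has_cycle_Cons: "has_cycle E \<Longrightarrow> has_cycle (e # E)"
  by (rule has_cycle_map_nth[where I = "map Suc [0..<length E]"])
     (simp_all add: comp_def map_nth distinct_map)

lemma num_components_Nil: "num_components N [] = N"
proof -
  have "component N [] ` {1..N} = (\<lambda>u. {u}) ` {1..N}"
    unfolding component_def by auto
  then show ?thesis
    unfolding num_components_eq_card_components by (simp add: card_image)
qed

lemma num_components_add_length:
  "is_ngraph N E \<Longrightarrow> acyclic_graph E \<Longrightarrow> num_components N E + length E = N"
proof (induction E)
  case Nil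
  show ?case by (simp add: num_components_Nil)
next
  case (Cons e E)
  obtain a b where e: "e = (a, b)"
    by fastforce
  have "is_ngraph N E" "a \<in> {1..N}" "b \<in> {1..N}" "a \<noteq> b"
    using Cons.prems(1) unfolding is_ngraph_def e by auto
  moreover have "acyclic_graph E" "\<not> connected_in E a b"
    using Cons.prems(2) has_cycle_Cons has_cycle_Cons_if_connected \<open>a \<noteq> b\<close>
    unfolding acyclic_graph_def e by blast+
  ultimately show ?case
    using Cons.IH num_components_Cons unfolding e by fastforce
qed

lemma is_ngraph_Delta1: "is_ngraph N E \<Longrightarrow> is_ngraph m (Delta1 m E)"
  unfolding is_ngraph_def Delta1_def by auto

lemma is_ngraph_Delta0:
  assumes "is_ngraph (m + n - 1) E"
  shows "is_ngraph n (Delta0 m E)"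
proof -
  have "clasp m a \<in> {1..n} \<and> clasp m b \<in> {1..n} \<and> clasp m a \<noteq> clasp m b"
    if "(a, b) \<in> set E" "\<not> (a \<le> m \<and> b \<le> m)" for a b
  proof -
    have "a \<in> {1..m + n - 1}" "b \<in> {1..m + n - 1}" "a \<noteq> b"
      using assms that(1) unfolding is_ngraph_def by auto
    then show ?thesis
      using that(2) unfolding clasp_def by auto
  qed
  then show ?thesis
    unfolding is_ngraph_def Delta0_def by auto
qed

lemma acyclic_graph_Delta1: "acyclic_graph E \<Longrightarrow> acyclic_graph (Delta1 m E)"
  unfolding acyclic_graph_def Delta1_def using has_cycle_filter by blast

lemma length_Delta1_add_length_Delta0: "length (Delta1 m E) + length (Delta0 m E) = length E"
  unfolding Delta1_def Delta0_def length_map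
  using sum_length_filter_compl[of "\<lambda>(a, b). a \<le> m \<and> b \<le> m" E] by (simp add: split_def)

theorem lemma3p7:
  fixes m n s t :: nat and \<Gamma> :: ngraph
  assumes "1 \<le> m" and "1 \<le> n"
    and "is_ngraph (m + n - 1) \<Gamma>"
    and "acyclic_graph \<Gamma>"
    and "acyclic_graph (Delta0 m \<Gamma>)"
    and "num_components m (Delta1 m \<Gamma>) = s"
    and "num_components n (Delta0 m \<Gamma>) = t"
  shows "num_components (m + n - 1) \<Gamma> = s + t - 1"
proof -
  have "num_components (m + n - 1) \<Gamma> + length \<Gamma> = m + n - 1"
    using assms(3,4) by (rule num_components_add_length)
  moreover have "s + length (Delta1 m \<Gamma>) = m"
    using num_components_add_length[OF is_ngraph_Delta1[OF assms(3)] acyclic_graph_Delta1[OF assms(4)], of m]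
      assms(6) by simp
  moreover have "t + length (Delta0 m \<Gamma>) = n"
    using num_components_add_length[OF is_ngraph_Delta0[OF assms(3)] assms(5)] assms(7) by simp
  ultimately show ?thesis
    using length_Delta1_add_length_Delta0[of m \<Gamma>] by linarith
qed

end
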